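(* Consider two instances of the baseline diffusion model that differ only in the new product's specification: $((v_{Hi})_{i=1}^N,s_p)$ in the first and $((v'_{Hi})_{i=1}^N,s'_p)$ in the second. Suppose $v'_{Hi}\ge v_{Hi}$ for all $i$ and $s'_p\ge s_p$. Let $D_n^t$ and $D_n'^t$ be the corresponding sets of new-product consumers. Then $D_n^t\subseteq D_n'^t$ for all $t\ge1$; equivalently, the thresholds of Proposition 1 satisfy $\underline H_t\ge\underline H'_t$ for all $t\ge2$.
   Context: Baseline diffusion model. There are $N\ge 2$ individuals $i\in\{1,\dots,N\}$ and two products, an incumbent $p_c$ and a new product $p_n$. The individuals are partitioned into $G\ge 2$ nonempty groups $N_1,\dots,N_G$. Every member of group $N_k$ has the same aspiration level $H_{N_k}$, and $H_{N_1}>\cdots>H_{N_G}$; write $H_i$ for individual $i$'s aspiration level. Consuming $p_c$ gives every individual the payoff $v_L$, where $H_{N_2}<v_L<H_{N_1}$. Consuming $p_n$ gives individual $i$ the payoff $v_{Hi}\ge H_{N_1}$. Product similarities are $s_{p_c,p_c}=s_{p_n,p_n}=1$, $s_{p_n,p_c}=s_p\in(0,1)$ and $s_{p_c,p_n}=0$. Individual similarities are $s_{i,i}=1$ and $s_{i,j}=s\in(0,1]$ for $i\ne j$. Dynamics. In period $0$ everyone consumes $p_c$ ($D_c^0=\{1,\dots,N\}$, $D_n^0=\emptyset$). For $t\ge1$, $U_i^t(p_c)=\sum_{t'=0}^{t-1}\sum_{j\in D_c^{t'}}s_{i,j}(v_L-H_i)$ and $U_i^t(p_n)=s_pU_i^t(p_c)+\sum_{t'=0}^{t-1}\sum_{j\in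 D_n^{t'}}s_{i,j}(v_{Hj}-H_i)$. Individual $i\in D_n^t$ iff $U_i^t(p_n)>U_i^t(p_c)$; otherwise $i\in D_c^t$. By Proposition 1, in every period $t$ the set $D_n^t$ equals $\{i:H_i>\underline H_t\}$ for some threshold $\underline H_t\in\mathbb R\cup\{-\infty\}$. *)

theory Defs
  imports "HOL-Analysis.Analysis"
begin

text \<open>Individuals are 0,...,N-1. Parameters:
  N (number of individuals), H (aspiration level of each individual),
  vL (payoff of the incumbent), vH (payoff of the new product, per individual),
  sp (product similarity s_{p_n,p_c}), s (similarity between distinct individuals).\<close>

definition ind_sim :: "real \<Rightarrow> nat \<Rightarrow> nat \<Rightarrow> real" where
  "ind_sim s i j = (if i = j then 1 else s)"

text \<open>Given the history of new-product consumer sets in periods 0..t-1 (as list of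
  length t), utilities in period t.\<close>
definition U_c :: "nat \<Rightarrow> (nat \<Rightarrow> real) \<Rightarrow> real \<Rightarrow> real \<Rightarrow> nat set list \<Rightarrow> nat \<Rightarrow> real" where
  "U_c N H vL s hist i =
     (\<Sum>t'<length hist. \<Sum>j\<in>{..<N} - hist ! t'. ind_sim s i j * (vL - H i))"

definition U_n :: "nat \<Rightarrow> (nat \<Rightarrow> real) \<Rightarrow> real \<Rightarrow> (nat \<Rightarrow> real) \<Rightarrow> real \<Rightarrow> real
                    \<Rightarrow> nat set list \<Rightarrow> nat \<Rightarrow> real" where
  "U_n N H vL vH sp s hist i =
     sp * U_c N H vL s hist i +
     (\<Sum>t'<length hist. \<Sum>j\<in>hist ! t'. ind_sim s i j * (vH j - H i))"

primrec Dn_hist :: "nat \<Rightarrow> (nat \<Rightarrow> real) \<Rightarrow> real \<Rightarrow> (nat \<Rightarrow> real) \<Rightarrow> real \<Rightarrow> real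
                     \<Rightarrow> nat \<Rightarrow> nat set list" where
  "Dn_hist N H vL vH sp s 0 = [{}]"
| "Dn_hist N H vL vH sp s (Suc t) =
     (let hist = Dn_hist N H vL vH sp s t in
      hist @ [{i. i < N \<and> U_n N H vL vH sp s hist i > U_c N H vL s hist i}])"

text \<open>Set D_n^t of new-product consumers in period t (D_c^t is the complement in {..<N}).\<close>
definition Dn :: "nat \<Rightarrow> (nat \<Rightarrow> real) \<Rightarrow> real \<Rightarrow> (nat \<Rightarrow> real) \<Rightarrow> real \<Rightarrow> real
                   \<Rightarrow> nat \<Rightarrow> nat set" where
  "Dn N H vL vH sp s t = Dn_hist N H vL vH sp s t ! t"

definition baseline_model ::
  "nat \<Rightarrow> nat \<Rightarrow> (nat \<Rightarrow> nat) \<Rightarrow> (nat \<Rightarrow> real) \<Rightarrow> (nat \<Rightarrow> real) \<Rightarrow> real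
   \<Rightarrow> (nat \<Rightarrow> real) \<Rightarrow> real \<Rightarrow> real \<Rightarrow> bool" where
  "baseline_model N G grp Hg H vL vH sp s \<longleftrightarrow>
     N \<ge> 2 \<and> G \<ge> 2 \<and>
     (\<forall>i<N. grp i < G) \<and> (\<forall>k<G. \<exists>i<N. grp i = k) \<and>
     (\<forall>k l. k < l \<and> l < G \<longrightarrow> Hg l < Hg k) \<and>
     (\<forall>i<N. H i = Hg (grp i)) \<and>
     Hg 1 < vL \<and> vL < Hg 0 \<and>
     (\<forall>i<N. vH i \<ge> Hg 0) \<and>
     0 < sp \<and> sp < 1 \<and> 0 < s \<and> s \<le> 1"

end

theory Submission
  imports Defs
begin

text \<open>Write the net utility U_n - U_c of individual i as a sum over periods and observed
  individuals j of similarity-weighted gains: vH j - H i if j consumed the new product, and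
  (sp - 1)(vL - H i) if j consumed the incumbent. An individual with aspiration above vL
  sees only nonnegative gains, and a strictly positive one from its own period-0
  experience, so it always adopts. An individual with aspiration at most vL sees gains that
  grow with vH, with sp and with the earlier adopter sets; by strong induction on the
  period, the adopter sets of the better specification are then larger in every period.\<close>

lemma length_Dn_hist: "length (Dn_hist N H vL vH sp s t) = Suc t"
  by (induction t) (simp_all add: Let_def)

lemma nth_Dn_hist: "k \<le> t \<Longrightarrow> Dn_hist N H vL vH sp s t ! k = Dn N H vL vH sp s k"
proof (induction t)
  case 0
  then show ?case by (simp add: Dn_def)
next
  case (Suc t)
  then show ?case
    using length_Dn_hist[of N H vL vH sp s t]
    by (cases "k = Suc t") (simp_all add: Dn_def Let_def nth_append)
qed

lemma Dn_0 [simp]: "Dn N H vL vH sp s 0 = {}"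
  by (simp add: Dn_def)

lemma Dn_Suc: "Dn N H vL vH sp s (Suc t) =
   {i. i < N \<and> U_n N H vL vH sp s (Dn_hist N H vL vH sp s t) i
                > U_c N H vL s (Dn_hist N H vL vH sp s t) i}"
  using length_Dn_hist[of N H vL vH sp s t] by (simp add: Dn_def Let_def nth_append)

lemma Dn_subset: "Dn N H vL vH sp s t \<subseteq> {..<N}"
  by (cases t) (auto simp: Dn_Suc)

lemma nth_Dn_hist_subset:
  "k < length (Dn_hist N H vL vH sp s t) \<Longrightarrow> Dn_hist N H vL vH sp s t ! k \<subseteq> {..<N}"
  using nth_Dn_hist[of k t] Dn_subset by (auto simp: length_Dn_hist)

definition adoption_gain ::
  "(nat \<Rightarrow> real) \<Rightarrow> real \<Rightarrow> (nat \<Rightarrow> real) \<Rightarrow> real \<Rightarrow> nat set \<Rightarrow> nat \<Rightarrow> nat \<Rightarrow> real" where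
  "adoption_gain H vL vH sp D i j = (if j \<in> D then vH j - H i else (sp - 1) * (vL - H i))"

definition net_utility :: "nat \<Rightarrow> (nat \<Rightarrow> real) \<Rightarrow> real \<Rightarrow> (nat \<Rightarrow> real) \<Rightarrow> real \<Rightarrow> real
                           \<Rightarrow> nat set list \<Rightarrow> nat \<Rightarrow> real" where
  "net_utility N H vL vH sp s hist i =
     (\<Sum>t'<length hist. \<Sum>j<N. ind_sim s i j * adoption_gain H vL vH sp (hist ! t') i j)"

lemma sum_adoption_gain:
  assumes "D \<subseteq> {..<N}"
  shows "(\<Sum>j<N. ind_sim s i j * adoption_gain H vL vH sp D i j)
       = (sp - 1) * (\<Sum>j\<in>{..<N} - D. ind_sim s i j * (vL - H i))
         + (\<Sum>j\<in>D. ind_sim s i j * (vH j - H i))"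
proof -
  let ?g = "\<lambda>j. ind_sim s i j * adoption_gain H vL vH sp D i j"
  have "(\<Sum>j<N. ?g j) = (\<Sum>j\<in>{..<N} - D. ?g j) + (\<Sum>j\<in>D. ?g j)"
    using assms by (simp add: sum.subset_diff)
  also have "(\<Sum>j\<in>{..<N} - D. ?g j) = (sp - 1) * (\<Sum>j\<in>{..<N} - D. ind_sim s i j * (vL - H i))"
    by (simp add: adoption_gain_def sum_distrib_left algebra_simps)
  also have "(\<Sum>j\<in>D. ?g j) = (\<Sum>j\<in>D. ind_sim s i j * (vH j - H i))"
    by (simp add: adoption_gain_def)
  finally show ?thesis .
qed

lemma U_n_minus_U_c:
  assumes "\<And>k. k < length hist \<Longrightarrow> hist ! k \<subseteq> {..<N}"
  shows "U_n N H vL vH sp s hist i - U_c N H vL s hist i = net_utility N H vL vH sp s hist i"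
proof -
  let ?A = "\<lambda>t'. \<Sum>j\<in>{..<N} - hist ! t'. ind_sim s i j * (vL - H i)"
  let ?B = "\<lambda>t'. \<Sum>j\<in>hist ! t'. ind_sim s i j * (vH j - H i)"
  have "net_utility N H vL vH sp s hist i = (\<Sum>t'<length hist. (sp - 1) * ?A t' + ?B t')"
    unfolding net_utility_def using assms by (intro sum.cong) (simp_all add: sum_adoption_gain)
  also have "\<dots> = (sp - 1) * (\<Sum>t'<length hist. ?A t') + (\<Sum>t'<length hist. ?B t')"
    by (simp add: sum.distrib sum_distrib_left)
  finally show ?thesis
    unfolding U_n_def U_c_def by (simp add: algebra_simps)
qed

lemma Dn_Suc_net_utility: "Dn N H vL vH sp s (Suc t) =
   {i. i < N \<and> 0 < net_utility N H vL vH sp s (Dn_hist N H vL vH sp s t) i}"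
  unfolding Dn_Suc
  using U_n_minus_U_c[OF nth_Dn_hist_subset, of N H vL vH sp s t]
  by (metis (no_types, opaque_lifting) diff_gt_0_iff_gt)

lemma ind_sim_nonneg: "0 \<le> s \<Longrightarrow> 0 \<le> ind_sim s i j"
  by (simp add: ind_sim_def)

lemma adoption_gain_nonneg:
  assumes "vL \<le> H i" "sp \<le> 1" "j \<in> D \<Longrightarrow> H i \<le> vH j"
  shows "0 \<le> adoption_gain H vL vH sp D i j"
  using assms by (simp add: adoption_gain_def mult_nonpos_nonpos)

lemma adoption_gain_mono:
  assumes "H i \<le> vL" "sp \<le> sp'" "sp \<le> 1" "D \<subseteq> D'"
    and "vH j \<le> vH' j" "H i \<le> vH' j"
  shows "adoption_gain H vL vH sp D i j \<le> adoption_gain H vL vH' sp' D' i j"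
proof -
  have "(sp - 1) * (vL - H i) \<le> 0"
    using assms(1,3) by (simp add: mult_nonpos_nonneg)
  moreover have "(sp - 1) * (vL - H i) \<le> (sp' - 1) * (vL - H i)"
    using assms(1,2) by (simp add: mult_right_mono)
  ultimately show ?thesis
    using assms(4-6) by (auto simp: adoption_gain_def)
qed

text \<open>The period-0 term with j = i is (1 - sp)(H i - vL), since nobody consumed the new
  product in period 0.\<close>
lemma net_utility_pos:
  assumes "0 < length hist" "hist ! 0 = {}" "i < N"
    and "vL < H i" "sp < 1" "0 \<le> s" "\<And>j. j < N \<Longrightarrow> H i \<le> vH j"
  shows "0 < net_utility N H vL vH sp s hist i"
proof -
  have nonneg: "0 \<le> ind_sim s i j * adoption_gain H vL vH sp D i j" if "j < N" for D j
    using assms(4-7) that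
    by (intro mult_nonneg_nonneg ind_sim_nonneg adoption_gain_nonneg) auto
  have "0 < ind_sim s i i * adoption_gain H vL vH sp (hist ! 0) i i"
    using assms(2,4,5) by (simp add: ind_sim_def adoption_gain_def mult_neg_neg)
  then have "0 < (\<Sum>j<N. ind_sim s i j * adoption_gain H vL vH sp (hist ! 0) i j)"
    using assms(3) nonneg by (intro sum_pos2[where i = i]) auto
  then show ?thesis
    unfolding net_utility_def using assms(1) nonneg
    by (intro sum_pos2[where i = 0 and I = "{..<length hist}"] sum_nonneg) auto
qed

lemma net_utility_mono:
  assumes "length hist = length hist'" "\<And>k. k < length hist \<Longrightarrow> hist ! k \<subseteq> hist' ! k"
    and "H i \<le> vL" "sp \<le> sp'" "sp \<le> 1" "0 \<le> s"
    and "\<And>j. j < N \<Longrightarrow> vH j \<le> vH' j" "\<And>j. j < N \<Longrightarrow> H i \<le> vH' j"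
  shows "net_utility N H vL vH sp s hist i \<le> net_utility N H vL vH' sp' s hist' i"
  unfolding net_utility_def assms(1)
  using assms(1-5,7,8)
  by (intro sum_mono mult_left_mono ind_sim_nonneg[OF assms(6)] adoption_gain_mono) auto

lemma Dn_mono:
  assumes "sp \<le> sp'" "sp' < 1" "0 \<le> s"
    and "\<And>j. j < N \<Longrightarrow> vH j \<le> vH' j"
    and "\<And>i j. i < N \<Longrightarrow> j < N \<Longrightarrow> H i \<le> vH' j"
  shows "Dn N H vL vH sp s t \<subseteq> Dn N H vL vH' sp' s t"
proof (induction t rule: less_induct)
  case (less t)
  show ?case
  proof (cases t)
    case (Suc m)
    let ?h = "Dn_hist N H vL vH sp s m" and ?h' = "Dn_hist N H vL vH' sp' s m"
    have hist_subset: "?h ! k \<subseteq> ?h' ! k" if "k < length ?h" for k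
      using that less Suc by (simp add: length_Dn_hist nth_Dn_hist)
    have "0 < net_utility N H vL vH' sp' s ?h' i"
      if "i < N" "0 < net_utility N H vL vH sp s ?h i" for i
    proof (cases "H i \<le> vL")
      case True
      have "net_utility N H vL vH sp s ?h i \<le> net_utility N H vL vH' sp' s ?h' i"
        using assms True that(1) hist_subset
        by (intro net_utility_mono) (simp_all add: length_Dn_hist)
      then show ?thesis using that(2) by linarith
    next
      case False
      then show ?thesis
        using assms that(1)
        by (intro net_utility_pos) (simp_all add: nth_Dn_hist length_Dn_hist)
    qed
    then show ?thesis
      unfolding Suc Dn_Suc_net_utility by blast
  qed simp
qed

lemma baseline_model_aspiration_le_top:
  assumes "baseline_model N G grp Hg H vL vH sp s" "i < N"
  shows "H i \<le> Hg 0"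
  using assms unfolding baseline_model_def
  by (metis bot_nat_0.not_eq_extremum order.refl order.strict_implies_order)

theorem lemma2:
  fixes N G :: nat and grp :: "nat \<Rightarrow> nat" and Hg H vH vH' :: "nat \<Rightarrow> real"
    and vL sp sp' s :: real
  assumes "baseline_model N G grp Hg H vL vH sp s"
    and "baseline_model N G grp Hg H vL vH' sp' s"
    and "\<forall>i<N. vH' i \<ge> vH i"
    and "sp' \<ge> sp"
  shows "\<forall>t\<ge>1. Dn N H vL vH sp s t \<subseteq> Dn N H vL vH' sp' s t"
proof (intro allI impI)
  fix t :: nat
  have "H i \<le> vH' j" if "i < N" "j < N" for i j
    using baseline_model_aspiration_le_top[OF assms(2) that(1)] assms(2) that(2)
    unfolding baseline_model_def by fastforce
  moreover have "sp' < 1" "0 \<le> s"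
    using assms(2) unfolding baseline_model_def by auto
  ultimately show "Dn N H vL vH sp s t \<subseteq> Dn N H vL vH' sp' s t"
    using assms(3,4) by (intro Dn_mono) auto
qed

end
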